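(* Let $A_m(x)=R_{2m}(x)$ and $B_m(x)=R_{2m+1}(x)$ for $m\ge0$. Then, as formal power series in $z$, \[ \sum_{m\ge0}A_m(x)z^m=\frac{1-xz^2}{1-(1+x+x^2)z+x^2z^2},\qquad \sum_{m\ge0}B_m(x)z^m=\frac{1+x^3z}{1-(1+x+x^2)z+x^2z^2}+x . \]
   Context: For $n\ge1$ let $\Xi_n$ be the poset on $\{x_1,\dots,x_n\}$ whose cover relations are exactly: $x_2\prec x_1$, $x_3\prec x_2$, and for $3\le i\le n-1$, $x_i\prec x_{i+1}$ if $i$ is odd and $x_{i+1}\prec x_i$ if $i$ is even (so $x_1>x_2>x_3<x_4>x_5<\cdots$). A filter of a poset is an up-closed subset. $\Omega_n$ is the lattice of filters of $\Xi_n$ under reverse inclusion; $\Omega_0$ is the one-element lattice. $R_n(x)=\sum_{F\in\Omega_n}x^{\,n-|F|}$ is the rank generating function of $\Omega_n$, with $R_0(x)=1$. *)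

theory Defs
  imports "HOL-Computational_Algebra.Formal_Power_Series"
begin

text \<open>The poset Xi_n on elements 1..n (element i stands for x_i).
  xi_cover n a b means that x_a is covered by x_b, i.e. x_a \<prec> x_b.\<close>
definition xi_cover :: "nat \<Rightarrow> nat \<Rightarrow> nat \<Rightarrow> bool" where
  "xi_cover n a b \<longleftrightarrow>
     (a = 2 \<and> b = 1 \<and> 2 \<le> n) \<or>
     (a = 3 \<and> b = 2 \<and> 3 \<le> n) \<or>
     (3 \<le> a \<and> a + 1 \<le> n \<and> odd a \<and> b = a + 1) \<or>
     (3 \<le> b \<and> b + 1 \<le> n \<and> even b \<and> a = b + 1)"

definition xi_le :: "nat \<Rightarrow> nat \<Rightarrow> nat \<Rightarrow> bool" where
  "xi_le n = (xi_cover n)\<^sup>*\<^sup>*"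

definition xi_filters :: "nat \<Rightarrow> nat set set" where
  "xi_filters n = {F. F \<subseteq> {1..n} \<and> (\<forall>a\<in>F. \<forall>b\<in>{1..n}. xi_le n a b \<longrightarrow> b \<in> F)}"

definition R :: "nat \<Rightarrow> real \<Rightarrow> real" where
  "R n x = (\<Sum>F\<in>xi_filters n. x ^ (n - card F))"

end

theory Submission
  imports Defs
begin

text \<open>Passing from Xi_n to Xi_(n+1) puts the new element x_(n+1) below x_n (for n = 1 or
  n even) or above it (for odd n \<ge> 3). Let c_n and d_n be the parts of R_n coming from the
  filters that contain resp. avoid x_n. Then c_(n+1) = c_n, d_(n+1) = x (c_n + d_n) in the first
  case and c_(n+1) = c_n + d_n, d_(n+1) = x d_n in the second. For n \<ge> 2 two consecutive steps
  compose to a 2 \<times> 2 matrix with trace 1 + x + x^2 and determinant x^2 whatever the parity of n,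
  so by Cayley-Hamilton R_(n+4) = (1 + x + x^2) R_(n+2) - x^2 R_n. Multiplying either generating
  function by 1 - (1 + x + x^2) z + x^2 z^2 therefore leaves a polynomial of degree at most 2,
  which is read off from R_0, ..., R_5.\<close>

lemma xi_cover_bounds: "xi_cover n a b \<Longrightarrow> a \<in> {1..n} \<and> b \<in> {1..n}"
  unfolding xi_cover_def by auto

lemma xi_cover_Suc_iff:
  assumes "n \<ge> 1"
  shows "xi_cover (Suc n) a b \<longleftrightarrow>
           xi_cover n a b
         \<or> (a = Suc n \<and> b = n \<and> (n = 1 \<or> even n))
         \<or> (a = n \<and> b = Suc n \<and> odd n \<and> 3 \<le> n)"
  using assms unfolding xi_cover_def le_Suc_eq by auto

lemma xi_filters_iff_cover_closed:
  "F \<in> xi_filters n \<longleftrightarrow> F \<subseteq> {1..n} \<and> (\<forall>a\<in>F. \<forall>b. xi_cover n a b \<longrightarrow> b \<in> F)"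
proof
  assume "F \<in> xi_filters n"
  moreover have "xi_le n a b" if "xi_cover n a b" for a b
    using that unfolding xi_le_def by (rule r_into_rtranclp)
  ultimately show "F \<subseteq> {1..n} \<and> (\<forall>a\<in>F. \<forall>b. xi_cover n a b \<longrightarrow> b \<in> F)"
    unfolding xi_filters_def using xi_cover_bounds by blast
next
  assume F: "F \<subseteq> {1..n} \<and> (\<forall>a\<in>F. \<forall>b. xi_cover n a b \<longrightarrow> b \<in> F)"
  have "b \<in> F" if "xi_le n a b" "a \<in> F" for a b
    using that unfolding xi_le_def
    by (induction rule: rtranclp_induct) (use F in blast)+
  with F show "F \<in> xi_filters n"
    unfolding xi_filters_def by blast
qed

lemma xi_filters_subset: "F \<in> xi_filters n \<Longrightarrow> F \<subseteq> {1..n}"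
  unfolding xi_filters_def by blast

lemma finite_of_mem_xi_filters: "F \<in> xi_filters n \<Longrightarrow> finite F"
  using xi_filters_subset finite_subset by blast

lemma card_le_of_mem_xi_filters: "F \<in> xi_filters n \<Longrightarrow> card F \<le> n"
  using card_mono[OF finite_atLeastAtMost xi_filters_subset] by fastforce

lemma finite_xi_filters: "finite (xi_filters n)"
proof (rule finite_subset)
  show "xi_filters n \<subseteq> Pow {1..n}"
    using xi_filters_subset by blast
qed simp

lemma xi_filters_Suc_iff:
  assumes "n \<ge> 1"
  shows "F \<in> xi_filters (Suc n) \<longleftrightarrow>
           F - {Suc n} \<in> xi_filters n \<and> F \<subseteq> {1..Suc n}
         \<and> (Suc n \<in> F \<and> (n = 1 \<or> even n) \<longrightarrow> n \<in> F)
         \<and> (n \<in> F \<and> odd n \<and> 3 \<le> n \<longrightarrow> Suc n \<in> F)"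
  (is "_ \<longleftrightarrow> ?G \<and> ?sub \<and> ?down \<and> ?up")
proof
  assume "F \<in> xi_filters (Suc n)"
  then have closed: "\<And>a b. a \<in> F \<Longrightarrow> xi_cover (Suc n) a b \<Longrightarrow> b \<in> F" and ?sub
    unfolding xi_filters_iff_cover_closed by blast+
  have "b \<in> F - {Suc n}" if "a \<in> F - {Suc n}" "xi_cover n a b" for a b
    using closed[of a b] that xi_cover_bounds[OF that(2)] xi_cover_Suc_iff[OF assms] by auto
  moreover have "F - {Suc n} \<subseteq> {1..n}"
    using \<open>?sub\<close> by (auto simp: le_Suc_eq)
  ultimately have ?G
    unfolding xi_filters_iff_cover_closed by blast
  moreover have ?down ?up
    using closed xi_cover_Suc_iff[OF assms] by blast+
  ultimately show "?G \<and> ?sub \<and> ?down \<and> ?up"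
    using \<open>?sub\<close> by blast
next
  assume H: "?G \<and> ?sub \<and> ?down \<and> ?up"
  have "b \<in> F" if "a \<in> F" "xi_cover (Suc n) a b" for a b
    using that(2) unfolding xi_cover_Suc_iff[OF assms]
  proof (elim disjE conjE)
    assume "xi_cover n a b"
    moreover from this have "a \<in> F - {Suc n}"
      using that(1) xi_cover_bounds by fastforce
    ultimately show "b \<in> F"
      using H unfolding xi_filters_iff_cover_closed by blast
  qed (use H that(1) in simp_all)
  with H show "F \<in> xi_filters (Suc n)"
    unfolding xi_filters_iff_cover_closed by blast
qed

lemma xi_filters_Suc_containing_last:
  assumes "n \<ge> 1"
  shows "{F \<in> xi_filters (Suc n). Suc n \<in> F}
           = insert (Suc n) ` {G \<in> xi_filters n. n = 1 \<or> even n \<longrightarrow> n \<in> G}"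
proof (intro set_eqI iffI)
  fix F assume F: "F \<in> {F \<in> xi_filters (Suc n). Suc n \<in> F}"
  then have "F - {Suc n} \<in> {G \<in> xi_filters n. n = 1 \<or> even n \<longrightarrow> n \<in> G}"
    using xi_filters_Suc_iff[OF assms, of F] by auto
  moreover have "F = insert (Suc n) (F - {Suc n})"
    using F by blast
  ultimately show "F \<in> insert (Suc n) ` {G \<in> xi_filters n. n = 1 \<or> even n \<longrightarrow> n \<in> G}"
    by blast
next
  fix F assume "F \<in> insert (Suc n) ` {G \<in> xi_filters n. n = 1 \<or> even n \<longrightarrow> n \<in> G}"
  then obtain G where F: "F = insert (Suc n) G" and G: "G \<in> xi_filters n" "n = 1 \<or> even n \<longrightarrow> n \<in> G"
    by blast
  have "G \<subseteq> {1..n}"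
    using G(1) by (rule xi_filters_subset)
  then have "F - {Suc n} = G" "F \<subseteq> {1..Suc n}"
    using F by auto
  then show "F \<in> {F \<in> xi_filters (Suc n). Suc n \<in> F}"
    using xi_filters_Suc_iff[OF assms, of F] F G by auto
qed

lemma xi_filters_Suc_avoiding_last:
  assumes "n \<ge> 1"
  shows "{F \<in> xi_filters (Suc n). Suc n \<notin> F}
           = {G \<in> xi_filters n. odd n \<and> 3 \<le> n \<longrightarrow> n \<notin> G}"
proof -
  have "F \<in> xi_filters (Suc n) \<and> Suc n \<notin> F \<longleftrightarrow> F \<in> xi_filters n \<and> (odd n \<and> 3 \<le> n \<longrightarrow> n \<notin> F)"
    for F
  proof (cases "Suc n \<in> F")
    case True
    then have "F \<notin> xi_filters n"
      using xi_filters_subset by fastforce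
    with True show ?thesis
      by blast
  next
    case False
    then have "F - {Suc n} = F"
      by blast
    moreover have "F \<in> xi_filters n \<Longrightarrow> F \<subseteq> {1..Suc n}"
      using xi_filters_subset[of F n] by auto
    ultimately show ?thesis
      using False xi_filters_Suc_iff[OF assms, of F] by auto
  qed
  then show ?thesis
    by blast
qed

definition R_containing_last :: "nat \<Rightarrow> real \<Rightarrow> real" where
  "R_containing_last n x = (\<Sum>F \<in> {F \<in> xi_filters n. n \<in> F}. x ^ (n - card F))"

definition R_avoiding_last :: "nat \<Rightarrow> real \<Rightarrow> real" where
  "R_avoiding_last n x = (\<Sum>F \<in> {F \<in> xi_filters n. n \<notin> F}. x ^ (n - card F))"

lemma R_eq_containing_plus_avoiding: "R n x = R_containing_last n x + R_avoiding_last n x"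
proof -
  have "xi_filters n = {F \<in> xi_filters n. n \<in> F} \<union> {F \<in> xi_filters n. n \<notin> F}"
    by blast
  then show ?thesis
    unfolding R_def R_containing_last_def R_avoiding_last_def
    using finite_xi_filters by (metis (no_types, lifting) sum.union_disjoint finite_Un disjoint_iff mem_Collect_eq)
qed

lemma R_containing_last_Suc:
  assumes "n \<ge> 1"
  shows "R_containing_last (Suc n) x = (if n = 1 \<or> even n then R_containing_last n x else R n x)"
proof -
  let ?A = "{G \<in> xi_filters n. n = 1 \<or> even n \<longrightarrow> n \<in> G}"
  have fresh: "Suc n \<notin> G" if "G \<in> ?A" for G
    using that xi_filters_subset by fastforce
  then have "inj_on (insert (Suc n)) ?A"
    by (intro inj_on_inverseI[of _ "\<lambda>F. F - {Suc n}"]) auto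
  then have "R_containing_last (Suc n) x = (\<Sum>G \<in> ?A. x ^ (Suc n - card (insert (Suc n) G)))"
    unfolding R_containing_last_def xi_filters_Suc_containing_last[OF assms]
    by (simp add: sum.reindex)
  also have "\<dots> = (\<Sum>G \<in> ?A. x ^ (n - card G))"
    using fresh finite_of_mem_xi_filters by (intro sum.cong) auto
  also have "\<dots> = (if n = 1 \<or> even n then R_containing_last n x else R n x)"
    unfolding R_containing_last_def R_def by (cases "n = 1 \<or> even n") simp_all
  finally show ?thesis .
qed

lemma R_avoiding_last_Suc:
  assumes "n \<ge> 1"
  shows "R_avoiding_last (Suc n) x = x * (if odd n \<and> 3 \<le> n then R_avoiding_last n x else R n x)"
proof -
  have "R_avoiding_last (Suc n) x
          = (\<Sum>G \<in> {G \<in> xi_filters n. odd n \<and> 3 \<le> n \<longrightarrow> n \<notin> G}. x * x ^ (n - card G))"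
    unfolding R_avoiding_last_def xi_filters_Suc_avoiding_last[OF assms]
    using card_le_of_mem_xi_filters by (intro sum.cong) (auto simp: Suc_diff_le)
  then show ?thesis
    unfolding R_avoiding_last_def R_def by (simp add: sum_distrib_left)
qed

lemma R_recurrence:
  assumes "n \<ge> 2"
  shows "R (n + 4) x = (1 + x + x^2) * R (n + 2) x - x^2 * R n x"
proof -
  have "n + 4 = Suc (Suc (Suc (Suc n)))" "n + 2 = Suc (Suc n)"
    by simp_all
  with assms show ?thesis
    unfolding \<open>n + 4 = _\<close> \<open>n + 2 = _\<close>
    by (cases "even n")
      (simp_all add: R_eq_containing_plus_avoiding R_containing_last_Suc R_avoiding_last_Suc
        algebra_simps power2_eq_square)
qed

lemma xi_filters_0: "xi_filters 0 = {{}}"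
  unfolding set_eq_iff xi_filters_iff_cover_closed by auto

lemma xi_filters_1: "xi_filters 1 = {{}, {1}}"
  unfolding set_eq_iff xi_filters_iff_cover_closed xi_cover_def
  by (auto simp: subset_singleton_iff)

lemma R_initial_values:
  "R 0 x = 1" "R 1 x = 1 + x" "R 2 x = 1 + x + x^2" "R 3 x = 1 + x + x^2 + x^3"
  "R 4 x = 1 + x + 2*x^2 + 2*x^3 + x^4" "R 5 x = 1 + 2*x + 2*x^2 + 3*x^3 + 2*x^4 + x^5"
proof -
  have "{F \<in> xi_filters 1. 1 \<in> F} = {{1}}" "{F \<in> xi_filters 1. 1 \<notin> F} = {{}}"
    unfolding xi_filters_1 by auto
  then have c1: "R_containing_last 1 x = 1" and d1: "R_avoiding_last 1 x = x"
    unfolding R_containing_last_def R_avoiding_last_def by simp_all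
  have c2: "R_containing_last 2 x = 1" and d2: "R_avoiding_last 2 x = x * (1 + x)"
    using R_containing_last_Suc[of 1 x] R_avoiding_last_Suc[of 1 x] c1 d1
    by (simp_all add: numeral_2_eq_2 R_eq_containing_plus_avoiding)
  have c3: "R_containing_last 3 x = 1" and d3: "R_avoiding_last 3 x = x * R 2 x"
    using R_containing_last_Suc[of 2 x] R_avoiding_last_Suc[of 2 x] c2 by simp_all
  have c4: "R_containing_last 4 x = R 3 x" and d4: "R_avoiding_last 4 x = x * R_avoiding_last 3 x"
    using R_containing_last_Suc[of 3 x] R_avoiding_last_Suc[of 3 x] by simp_all
  have c5: "R_containing_last 5 x = R_containing_last 4 x" and d5: "R_avoiding_last 5 x = x * R 4 x"
    using R_containing_last_Suc[of 4 x] R_avoiding_last_Suc[of 4 x] by simp_all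
  show "R 0 x = 1"
    unfolding R_def xi_filters_0 by simp
  show R1: "R 1 x = 1 + x" and R2: "R 2 x = 1 + x + x^2"
    using c1 d1 c2 d2 by (simp_all add: R_eq_containing_plus_avoiding algebra_simps power2_eq_square)
  show R3: "R 3 x = 1 + x + x^2 + x^3"
    unfolding R_eq_containing_plus_avoiding[of 3] c3 d3 R2 by algebra
  show R4: "R 4 x = 1 + x + 2*x^2 + 2*x^3 + x^4"
    unfolding R_eq_containing_plus_avoiding[of 4] c4 d4 d3 R2 R3 by algebra
  show "R 5 x = 1 + 2*x + 2*x^2 + 3*x^3 + 2*x^4 + x^5"
    unfolding R_eq_containing_plus_avoiding[of 5] c5 d5 c4 R3 R4 by algebra
qed

lemma Abs_fps_times_second_order_recurrence:
  fixes a :: "nat \<Rightarrow> 'a::comm_ring_1"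
  assumes rec: "\<And>m. m \<ge> 1 \<Longrightarrow> a (m + 2) = t * a (m + 1) - D * a m"
  shows "Abs_fps a * (1 - fps_const t * fps_X + fps_const D * fps_X^2)
           = fps_const (a 0) + fps_const (a 1 - t * a 0) * fps_X
             + fps_const (a 2 - t * a 1 + D * a 0) * fps_X^2"
proof (rule fps_ext)
  fix m
  have "Abs_fps a * (1 - fps_const t * fps_X + fps_const D * fps_X^2)
          = Abs_fps a - fps_const t * (fps_X * Abs_fps a) + fps_const D * (fps_X^2 * Abs_fps a)"
    by (simp add: algebra_simps)
  then have coeff: "fps_nth (Abs_fps a * (1 - fps_const t * fps_X + fps_const D * fps_X^2)) m
      = a m - t * (if m = 0 then 0 else a (m - 1)) + D * (if m < 2 then 0 else a (m - 2))"
    by (simp add: fps_X_power_mult_nth)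
  consider "m = 0" | "m = 1" | "m = 2" | k where "m = Suc (Suc (Suc k))"
    by (metis One_nat_def Suc_1 not0_implies_Suc)
  then show "fps_nth (Abs_fps a * (1 - fps_const t * fps_X + fps_const D * fps_X^2)) m
      = fps_nth (fps_const (a 0) + fps_const (a 1 - t * a 0) * fps_X
         + fps_const (a 2 - t * a 1 + D * a 0) * fps_X^2) m"
  proof cases
    case 4
    then show ?thesis
      using coeff rec[of "Suc k"] by simp
  qed (use coeff in \<open>simp_all add: fps_X_power_nth\<close>)
qed

definition R_denominator :: "real \<Rightarrow> real fps" where
  "R_denominator x = 1 - fps_const (1 + x + x^2) * fps_X + fps_const (x^2) * fps_X^2"

lemma R_denominator_nonzero: "R_denominator x \<noteq> 0"
proof -
  have "fps_nth (R_denominator x) 0 = 1"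
    unfolding R_denominator_def by simp
  then show ?thesis
    by auto
qed

lemma R_even_times_denominator:
  "Abs_fps (\<lambda>m. R (2 * m) x) * R_denominator x = 1 - fps_const x * fps_X^2"
proof -
  define a where "a m = R (2 * m) x" for m
  have "a (m + 2) = (1 + x + x^2) * a (m + 1) - x^2 * a m" if "m \<ge> 1" for m
  proof -
    have "a (m + 2) = R (2 * m + 4) x" "a (m + 1) = R (2 * m + 2) x"
      unfolding a_def by (auto intro: arg_cong[where f = "\<lambda>k. R k x"])
    moreover have "R (2 * m + 4) x = (1 + x + x^2) * R (2 * m + 2) x - x^2 * R (2 * m) x"
      using that by (intro R_recurrence) simp
    ultimately show ?thesis
      unfolding a_def by (simp only:)
  qed
  then have "Abs_fps a * R_denominator x
      = fps_const (a 0) + fps_const (a 1 - (1 + x + x^2) * a 0) * fps_X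
        + fps_const (a 2 - (1 + x + x^2) * a 1 + x^2 * a 0) * fps_X^2"
    unfolding R_denominator_def by (rule Abs_fps_times_second_order_recurrence)
  also have "\<dots> = 1 - fps_const x * fps_X^2"
  proof -
    have "a 0 = 1" "a 1 = 1 + x + x^2" "a 2 = 1 + x + 2*x^2 + 2*x^3 + x^4"
      unfolding a_def by (simp_all add: R_initial_values)
    then have "a 1 - (1 + x + x^2) * a 0 = 0" "a 2 - (1 + x + x^2) * a 1 + x^2 * a 0 = - x"
      by algebra+
    then show ?thesis
      using \<open>a 0 = 1\<close> by (simp add: fps_const_neg[symmetric] del: fps_const_neg)
  qed
  finally show ?thesis
    unfolding a_def[abs_def] .
qed

lemma R_odd_times_denominator:
  "(Abs_fps (\<lambda>m. R (2 * m + 1) x) - fps_const x) * R_denominator x = 1 + fps_const (x^3) * fps_X"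
proof -
  \<comment> \<open>Changing the constant term keeps the recurrence, which only involves indices \<open>\<ge> 1\<close>.\<close>
  define b where "b m = R (2 * m + 1) x - (if m = 0 then x else 0)" for m
  have "Abs_fps (\<lambda>m. R (2 * m + 1) x) - fps_const x = Abs_fps b"
    unfolding b_def by (rule fps_ext) simp
  moreover have "b (m + 2) = (1 + x + x^2) * b (m + 1) - x^2 * b m" if "m \<ge> 1" for m
  proof -
    have "b (m + 2) = R (2 * m + 1 + 4) x" "b (m + 1) = R (2 * m + 1 + 2) x" "b m = R (2 * m + 1) x"
      unfolding b_def using that by (auto intro: arg_cong[where f = "\<lambda>k. R k x"])
    moreover have "R (2 * m + 1 + 4) x = (1 + x + x^2) * R (2 * m + 1 + 2) x - x^2 * R (2 * m + 1) x"
      using that by (intro R_recurrence) simp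
    ultimately show ?thesis
      by (simp only:)
  qed
  then have "Abs_fps b * R_denominator x
      = fps_const (b 0) + fps_const (b 1 - (1 + x + x^2) * b 0) * fps_X
        + fps_const (b 2 - (1 + x + x^2) * b 1 + x^2 * b 0) * fps_X^2"
    unfolding R_denominator_def by (rule Abs_fps_times_second_order_recurrence)
  moreover have "b 0 = 1" "b 1 = 1 + x + x^2 + x^3" "b 2 = 1 + 2*x + 2*x^2 + 3*x^3 + 2*x^4 + x^5"
    unfolding b_def by (simp_all add: R_initial_values flip: One_nat_def)
  moreover from this have "b 1 - (1 + x + x^2) * b 0 = x^3" "b 2 - (1 + x + x^2) * b 1 + x^2 * b 0 = 0"
    by algebra+
  ultimately show ?thesis
    by simp
qed

theorem mainTheorem4:
  fixes x :: real
  shows "Abs_fps (\<lambda>m. R (2*m) x)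
           = (1 - fps_const x * fps_X^2)
             / (1 - fps_const (1 + x + x^2) * fps_X + fps_const (x^2) * fps_X^2)
       \<and> Abs_fps (\<lambda>m. R (2*m+1) x)
           = (1 + fps_const (x^3) * fps_X)
             / (1 - fps_const (1 + x + x^2) * fps_X + fps_const (x^2) * fps_X^2)
             + fps_const x"
proof -
  have "Abs_fps (\<lambda>m. R (2*m) x) = (1 - fps_const x * fps_X^2) / R_denominator x"
    using R_even_times_denominator R_denominator_nonzero by (metis nonzero_mult_div_cancel_right)
  moreover have "Abs_fps (\<lambda>m. R (2*m+1) x) - fps_const x = (1 + fps_const (x^3) * fps_X) / R_denominator x"
    using R_odd_times_denominator R_denominator_nonzero by (metis nonzero_mult_div_cancel_right)
  ultimately show ?thesis
    unfolding R_denominator_def by (simp add: diff_eq_eq)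
qed

end
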